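(* Let $(G,c)$ be an instance of min-cost 2ECSS and $(G',c')$ its inflation. For $x\in P_{EC}(G)$ define $x'\in\mathbb R^{E'}$ by $x'_{v'w'}=x_{vw}$ for each inter-clique edge $v'w'$ of $G'$ corresponding to the edge $vw$ of $G$, and $x'_{e'}=1$ for each $e'\in F'$. Then $x'\in P_{NC}(G')$ and $c'^{\top}x'=c^{\top}x$.
   Context: $G=(V,E)$ is a simple undirected graph with nonnegative edge costs $c\in\mathbb R_+^E$. $P_{EC}(G)=\{x\in\mathbb R^E: x(\delta_G(S))\ge 2\ \forall\,\emptyset\ne S\subsetneq V;\ 0\le x\le 1\}$ (the cut LP region for 2-edge connected spanning subgraphs), where $\delta_G(S)$ is the set of edges with exactly one end in $S$. Inflation: $G'=(V',E')$ is obtained by replacing each node $u$ of $G$ by a complete graph $C'_u$ on $\deg_G(u)$ new nodes (the $C'_u$ pairwise node-disjoint), and each edge $vw$ of $G$ by an edge $v'w'$ with $v'\in C'_v$, $w'\in C'_w$, such that each node of each $C'_u$ is incident to exactly one such inter-clique edge; costs: $c'_{v'w'}=c_{vw}$ and $c'_{e'}=0$ for every edge $e'$ in $F':=\bigcup_u E(C'_u)$. For a graph $H=(W,D)$ with nonnegative costs $d$, let $H^0=(W,\{e\in D: d_e=0\})$, and let $P_{NC}(H)$ (the partition LP region for 2NCSS) be the set of $x\in\mathbb R^D$ with $x(\delta_H(S))\ge 2$ for all $\emptyset\ne S\subsetneq W$, $0\le x\le 1$, and, for every node $w\in W$ and every partition $\mathcal P$ of $W\setminus\{w\}$ such that the node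 set of each connected component of $H^0-w$ is contained in a set of $\mathcal P$, $\sum_{e\in e_{H-w}(\mathcal P)}x_e\ge|\mathcal P|-1$, where $e_{H-w}(\mathcal P)$ is the set of edges of $H-w$ whose end nodes lie in different sets of $\mathcal P$. *)

theory Defs
  imports Complex_Main "HOL-Library.Disjoint_Sets"
begin

text \<open>Simple undirected graphs: a finite node set V and an edge set E of
  two-element subsets of V. Vectors in R^E are functions on edges (values
  outside E are irrelevant).\<close>

definition simple_graph :: "'a set \<Rightarrow> 'a set set \<Rightarrow> bool" where
  "simple_graph V E \<longleftrightarrow> finite V \<and> (\<forall>e\<in>E. \<exists>u v. u \<in> V \<and> v \<in> V \<and> u \<noteq> v \<and> e = {u, v})"

definition cut :: "'a set set \<Rightarrow> 'a set \<Rightarrow> 'a set set" where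
  "cut E S = {e \<in> E. card (e \<inter> S) = 1}"

definition P_EC :: "'a set \<Rightarrow> 'a set set \<Rightarrow> ('a set \<Rightarrow> real) set" where
  "P_EC V E = {x. (\<forall>S. S \<noteq> {} \<and> S \<subset> V \<longrightarrow> (\<Sum>e\<in>cut E S. x e) \<ge> 2)
                  \<and> (\<forall>e\<in>E. 0 \<le> x e \<and> x e \<le> 1)}"

definition reach0 :: "'b set set \<Rightarrow> ('b set \<Rightarrow> real) \<Rightarrow> 'b \<Rightarrow> 'b \<Rightarrow> 'b \<Rightarrow> bool" where
  "reach0 D d w a b \<longleftrightarrow>
     (a, b) \<in> {(p, q). {p, q} \<in> D \<and> d {p, q} = 0 \<and> p \<noteq> w \<and> q \<noteq> w}\<^sup>*"

definition comp0 :: "'b set \<Rightarrow> 'b set set \<Rightarrow> ('b set \<Rightarrow> real) \<Rightarrow> 'b \<Rightarrow> 'b \<Rightarrow> 'b set" where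
  "comp0 W D d w a = {b \<in> W - {w}. reach0 D d w a b}"

definition cross_edges :: "'b set set \<Rightarrow> 'b \<Rightarrow> 'b set set \<Rightarrow> 'b set set" where
  "cross_edges D w P = {e \<in> D. w \<notin> e \<and> \<not> (\<exists>X\<in>P. e \<subseteq> X)}"

definition P_NC :: "'b set \<Rightarrow> 'b set set \<Rightarrow> ('b set \<Rightarrow> real) \<Rightarrow> ('b set \<Rightarrow> real) set" where
  "P_NC W D d = {x. (\<forall>S. S \<noteq> {} \<and> S \<subset> W \<longrightarrow> (\<Sum>e\<in>cut D S. x e) \<ge> 2)
                  \<and> (\<forall>e\<in>D. 0 \<le> x e \<and> x e \<le> 1)
                  \<and> (\<forall>w\<in>W. \<forall>P. partition_on (W - {w}) P
                        \<and> (\<forall>a\<in>W - {w}. \<exists>X\<in>P. comp0 W D d w a \<subseteq> X)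
                        \<longrightarrow> (\<Sum>e\<in>cross_edges D w P. x e) \<ge> real (card P) - 1)}"

text \<open>The (canonical) inflation G' of G: node (u,e) of the clique C'_u
  corresponds to the edge e of G incident to u.\<close>
definition infl_V :: "'a set \<Rightarrow> 'a set set \<Rightarrow> ('a \<times> 'a set) set" where
  "infl_V V E = {(u, e). u \<in> V \<and> e \<in> E \<and> u \<in> e}"

definition infl_F :: "'a set \<Rightarrow> 'a set set \<Rightarrow> ('a \<times> 'a set) set set" where
  "infl_F V E = {{(u, e), (u, f)} | u e f. u \<in> V \<and> e \<in> E \<and> f \<in> E \<and> u \<in> e \<and> u \<in> f \<and> e \<noteq> f}"

definition infl_I :: "'a set set \<Rightarrow> ('a \<times> 'a set) set set" where
  "infl_I E = {{(v, e), (w, e)} | v w e. e \<in> E \<and> e = {v, w} \<and> v \<noteq> w}"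

definition infl_E :: "'a set \<Rightarrow> 'a set set \<Rightarrow> ('a \<times> 'a set) set set" where
  "infl_E V E = infl_F V E \<union> infl_I E"

definition orig_edge :: "('a \<times> 'a set) set \<Rightarrow> 'a set" where
  "orig_edge e' = the_elem (snd ` e')"

definition infl_cost :: "'a set \<Rightarrow> 'a set set \<Rightarrow> ('a set \<Rightarrow> real) \<Rightarrow> ('a \<times> 'a set) set \<Rightarrow> real" where
  "infl_cost V E c e' = (if e' \<in> infl_F V E then 0 else c (orig_edge e'))"

definition infl_vec :: "'a set \<Rightarrow> 'a set set \<Rightarrow> ('a set \<Rightarrow> real) \<Rightarrow> ('a \<times> 'a set) set \<Rightarrow> real" where
  "infl_vec V E x e' = (if e' \<in> infl_F V E then 1 else x (orig_edge e'))"

end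

theory Submission
  imports Defs
begin

text \<open>Clique edges get value 1 and cost 0, so the cost is preserved. A cut of G' induces a cut
  of G: take the nodes all of whose copies lie inside, plus one node with a copy inside. An edge
  of that cut whose copy in G' does not cross is charged to a clique edge of value 1 that
  crosses, and distinct such edges get distinct clique edges. For a partition constraint at w,
  each clique C'_r - w is connected by zero-cost edges, so it lies in a single class; the
  projections of the classes to G are disjoint proper node sets, summing their cut constraints
  counts every edge at most twice, and every edge involved is the copy of a crossing edge of
  the partition, except possibly the edge of G at w, which contributes at most 1.\<close>

definition infl_edge :: "'a set \<Rightarrow> ('a \<times> 'a set) set" where
  "infl_edge g = (\<lambda>u. (u, g)) ` g"

lemma infl_edge_doubleton [simp]: "infl_edge {p, q} = {(p, {p, q}), (q, {p, q})}"
  by (simp add: infl_edge_def)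

lemma orig_edge_infl_edge: "g \<noteq> {} \<Longrightarrow> orig_edge (infl_edge g) = g"
  by (simp add: orig_edge_def infl_edge_def image_image image_constant_conv)

lemma card_doubleton_Int_eq_1_iff:
  "a \<noteq> b \<Longrightarrow> card ({a, b} \<inter> S) = 1 \<longleftrightarrow> (a \<in> S \<longleftrightarrow> b \<notin> S)"
  by (cases "a \<in> S"; cases "b \<in> S") auto

lemma card_crossing_members_le:
  assumes "finite P" and "disjoint_family_on T P" and "finite g"
  shows "card {X \<in> P. g \<in> cut E (T X)} \<le> card g"
proof -
  let ?Q = "{X \<in> P. g \<in> cut E (T X)}"
  have "card ?Q = (\<Sum>X\<in>?Q. card (g \<inter> T X))"
    by (simp add: cut_def)
  also have "\<dots> = card (\<Union>X\<in>?Q. g \<inter> T X)"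
    using assms by (intro card_UN_disjoint[symmetric]) (auto simp: disjoint_family_on_def)
  also have "\<dots> \<le> card g"
    using assms(3) by (intro card_mono) auto
  finally show ?thesis .
qed

lemma sum_cuts_disjoint_family_le:
  fixes x :: "'a set \<Rightarrow> real"
  assumes "finite P" and "disjoint_family_on T P" and "finite C"
    and cut_sub: "\<And>X. X \<in> P \<Longrightarrow> cut E (T X) \<subseteq> C"
    and "\<And>g. g \<in> C \<Longrightarrow> card g = 2" and "\<And>g. g \<in> C \<Longrightarrow> 0 \<le> x g"
  shows "(\<Sum>X\<in>P. \<Sum>g\<in>cut E (T X). x g) \<le> 2 * (\<Sum>g\<in>C. x g)"
proof -
  have "(\<Sum>X\<in>P. \<Sum>g\<in>cut E (T X). x g) = (\<Sum>X\<in>P. \<Sum>g\<in>C. if g \<in> cut E (T X) then x g else 0)"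
  proof (rule sum.cong[OF refl])
    fix X assume "X \<in> P"
    then have "C \<inter> cut E (T X) = cut E (T X)"
      using cut_sub by blast
    then show "(\<Sum>g\<in>cut E (T X). x g) = (\<Sum>g\<in>C. if g \<in> cut E (T X) then x g else 0)"
      using sum.inter_restrict[OF \<open>finite C\<close>, of x "cut E (T X)"] by simp
  qed
  also have "\<dots> = (\<Sum>g\<in>C. \<Sum>X\<in>P. if g \<in> cut E (T X) then x g else 0)"
    by (rule sum.swap)
  also have "\<dots> = (\<Sum>g\<in>C. real (card {X \<in> P. g \<in> cut E (T X)}) * x g)"
    using \<open>finite P\<close> by (simp add: sum.If_cases Int_def conj_commute)
  also have "\<dots> \<le> (\<Sum>g\<in>C. 2 * x g)"
  proof (rule sum_mono)
    fix g assume "g \<in> C"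
    then have "card {X \<in> P. g \<in> cut E (T X)} \<le> 2"
      using card_crossing_members_le[OF assms(1,2)] assms(5)
      by (metis card_ge_0_finite zero_less_numeral)
    then show "real (card {X \<in> P. g \<in> cut E (T X)}) * x g \<le> 2 * x g"
      using assms(6)[OF \<open>g \<in> C\<close>] by (intro mult_right_mono) auto
  qed
  finally show ?thesis
    by (simp add: sum_distrib_left)
qed

locale inflation =
  fixes V :: "'a set" and E :: "'a set set"
  assumes simple: "simple_graph V E"
begin

abbreviation "V' \<equiv> infl_V V E"
abbreviation "E' \<equiv> infl_E V E"
abbreviation "F' \<equiv> infl_F V E"

lemma edgeE:
  assumes "g \<in> E"
  obtains p q where "p \<in> V" "q \<in> V" "p \<noteq> q" "g = {p, q}"
  using assms simple by (auto simp: simple_graph_def)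

lemma edges_subset_Pow: "E \<subseteq> Pow V"
  by (auto elim: edgeE)

lemma card_edge: "g \<in> E \<Longrightarrow> card g = 2"
  by (auto elim: edgeE)

lemma finite_V: "finite V"
  using simple by (simp add: simple_graph_def)

lemma finite_E: "finite E"
  using edges_subset_Pow finite_V by (meson finite_Pow_iff finite_subset)

lemma finite_V': "finite V'"
proof (rule finite_subset)
  show "V' \<subseteq> V \<times> E"
    by (auto simp: infl_V_def)
qed (use finite_V finite_E in blast)

lemma infl_E_subset_Pow: "E' \<subseteq> Pow V'"
  using edges_subset_Pow by (auto simp: infl_E_def infl_F_def infl_I_def infl_V_def)

lemma finite_E': "finite E'"
  using infl_E_subset_Pow finite_V' by (meson finite_Pow_iff finite_subset)

lemma clique_edge: "(r, g) \<in> V' \<Longrightarrow> (r, h) \<in> V' \<Longrightarrow> g \<noteq> h \<Longrightarrow> {(r, g), (r, h)} \<in> F'"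
  by (auto simp: infl_F_def infl_V_def)

lemma infl_edge_in_V': "g \<in> E \<Longrightarrow> r \<in> g \<Longrightarrow> (r, g) \<in> V'"
  using edges_subset_Pow by (auto simp: infl_V_def)

lemma infl_I_eq: "infl_I E = infl_edge ` E"
proof
  show "infl_I E \<subseteq> infl_edge ` E"
  proof
    fix a assume "a \<in> infl_I E"
    then obtain v w e where "e \<in> E" "e = {v, w}" "a = {(v, e), (w, e)}"
      unfolding infl_I_def by blast
    then have "a = infl_edge e"
      by simp
    then show "a \<in> infl_edge ` E"
      using \<open>e \<in> E\<close> by blast
  qed
  show "infl_edge ` E \<subseteq> infl_I E"
  proof
    fix a assume "a \<in> infl_edge ` E"
    then obtain g where "g \<in> E" "a = infl_edge g"
      by blast
    then obtain p q where "p \<noteq> q" "g = {p, q}"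
      by (auto elim: edgeE)
    then show "a \<in> infl_I E"
      using \<open>g \<in> E\<close> \<open>a = infl_edge g\<close> unfolding infl_I_def by auto
  qed
qed

lemma infl_E_eq: "E' = F' \<union> infl_edge ` E"
  by (simp add: infl_E_def infl_I_eq)

lemma infl_edge_notin_F':
  assumes "g \<in> E"
  shows "infl_edge g \<notin> F'"
proof
  obtain p q where pq: "p \<noteq> q" "g = {p, q}"
    using assms by (rule edgeE)
  then have "(p, g) \<in> infl_edge g" "(q, g) \<in> infl_edge g"
    unfolding infl_edge_def by blast+
  moreover assume "infl_edge g \<in> F'"
  then obtain u e f where "infl_edge g = {(u, e), (u, f)}"
    unfolding infl_F_def mem_Collect_eq by metis
  ultimately show False
    using pq(1) by auto
qed

lemma orig_edge_infl_edge_of_edge [simp]: "g \<in> E \<Longrightarrow> orig_edge (infl_edge g) = g"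
  by (rule orig_edge_infl_edge) (auto elim: edgeE)

lemma inj_on_infl_edge: "inj_on infl_edge E"
  by (rule inj_on_inverseI[of _ orig_edge]) simp

lemma infl_vec_infl_edge [simp]: "g \<in> E \<Longrightarrow> infl_vec V E x (infl_edge g) = x g"
  by (simp add: infl_vec_def infl_edge_notin_F')

lemma infl_cost_infl_edge [simp]: "g \<in> E \<Longrightarrow> infl_cost V E c (infl_edge g) = c g"
  by (simp add: infl_cost_def infl_edge_notin_F')

lemma sum_infl_edge:
  assumes "A \<subseteq> E"
  shows "(\<Sum>e\<in>infl_edge ` A. f e) = (\<Sum>g\<in>A. f (infl_edge g))"
  using inj_on_subset[OF inj_on_infl_edge assms] by (rule sum.reindex[unfolded comp_def])

lemma sum_infl_vec_eq:
  assumes "K \<subseteq> E'"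
  shows "(\<Sum>e\<in>K. infl_vec V E x e) = real (card (K \<inter> F')) + (\<Sum>g | g \<in> E \<and> infl_edge g \<in> K. x g)"
proof -
  let ?A = "{g \<in> E. infl_edge g \<in> K}"
  have split: "K = (K \<inter> F') \<union> infl_edge ` ?A"
    using assms infl_E_eq by auto
  have "finite K"
    using assms finite_E' finite_subset by blast
  moreover have "(K \<inter> F') \<inter> infl_edge ` ?A = {}"
    using infl_edge_notin_F' by auto
  ultimately have "(\<Sum>e\<in>K. infl_vec V E x e)
      = (\<Sum>e\<in>K \<inter> F'. infl_vec V E x e) + (\<Sum>e\<in>infl_edge ` ?A. infl_vec V E x e)"
    using finite_E by (subst split, subst sum.union_disjoint) auto
  also have "(\<Sum>e\<in>K \<inter> F'. infl_vec V E x e) = real (card (K \<inter> F'))"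
    by (simp add: infl_vec_def)
  also have "(\<Sum>e\<in>infl_edge ` ?A. infl_vec V E x e) = (\<Sum>g\<in>?A. x g)"
    by (simp add: sum_infl_edge)
  finally show ?thesis .
qed

lemma infl_cost_sum:
  "(\<Sum>e\<in>E'. infl_cost V E c e * infl_vec V E x e) = (\<Sum>g\<in>E. c g * x g)"
proof -
  have "finite F'"
    using finite_E' by (simp add: infl_E_def)
  moreover have "F' \<inter> infl_edge ` E = {}"
    using infl_edge_notin_F' by auto
  ultimately have "(\<Sum>e\<in>E'. infl_cost V E c e * infl_vec V E x e)
      = (\<Sum>e\<in>F'. infl_cost V E c e * infl_vec V E x e)
        + (\<Sum>e\<in>infl_edge ` E. infl_cost V E c e * infl_vec V E x e)"
    using finite_E by (simp add: infl_E_eq sum.union_disjoint)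
  also have "(\<Sum>e\<in>F'. infl_cost V E c e * infl_vec V E x e) = 0"
    by (simp add: infl_cost_def)
  also have "(\<Sum>e\<in>infl_edge ` E. infl_cost V E c e * infl_vec V E x e) = (\<Sum>g\<in>E. c g * x g)"
    by (simp add: sum_infl_edge)
  finally show ?thesis
    by simp
qed

lemma proper_subset_meets_two_cliques:
  assumes "S' \<noteq> {}" and "S' \<subset> V'"
  obtains u g v h where "u \<noteq> v" "(u, g) \<in> S'" "(v, h) \<in> V' - S'"
proof -
  obtain a e where ae: "(a, e) \<in> S'"
    using assms(1) by auto
  obtain b f where bf: "(b, f) \<in> V' - S'"
    using assms(2) by auto
  show thesis
  proof (cases "a = b")
    case False
    then show thesis
      using that ae bf by blast
  next
    case True
    have "e \<in> E" "a \<in> e"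
      using ae assms(2) by (auto simp: infl_V_def)
    then obtain a' where a': "a' \<in> e" "a' \<noteq> a"
      by (auto elim!: edgeE)
    then have "(a', e) \<in> V'"
      using \<open>e \<in> E\<close> by (intro infl_edge_in_V')
    show thesis
    proof (cases "(a', e) \<in> S'")
      case True
      then show thesis
        using that[OF a'(2)] bf \<open>a = b\<close> by blast
    next
      case False
      then show thesis
        using that[OF a'(2)[symmetric]] ae \<open>(a', e) \<in> V'\<close> by blast
    qed
  qed
qed

lemma uncrossed_cut_subset_mismatched:
  "{g \<in> cut E T. infl_edge g \<notin> cut E' S'} \<subseteq> snd ` {(r, g) \<in> V'. (r, g) \<in> S' \<longleftrightarrow> r \<notin> T}"
proof
  fix g assume g: "g \<in> {g \<in> cut E T. infl_edge g \<notin> cut E' S'}"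
  then have "g \<in> E" and "card (g \<inter> T) = 1"
    by (auto simp: cut_def)
  then obtain p q where pq: "p \<noteq> q" "g = {p, q}"
    by (auto elim: edgeE)
  have "(p \<in> T) \<noteq> (q \<in> T)"
    using \<open>card (g \<inter> T) = 1\<close> card_doubleton_Int_eq_1_iff[OF pq(1)] pq(2) by simp
  moreover have "infl_edge g \<in> E'"
    using \<open>g \<in> E\<close> by (simp add: infl_E_eq)
  then have "((p, g) \<in> S') = ((q, g) \<in> S')"
    using g card_doubleton_Int_eq_1_iff[of "(p, g)" "(q, g)" S'] pq by (auto simp: cut_def)
  moreover have "(p, g) \<in> V'" "(q, g) \<in> V'"
    using \<open>g \<in> E\<close> pq by (auto intro: infl_edge_in_V')
  ultimately show "g \<in> snd ` {(r, g) \<in> V'. (r, g) \<in> S' \<longleftrightarrow> r \<notin> T}"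
    by (cases "(p, g) \<in> S'") force+
qed

text \<open>Join each copy (r, g) that disagrees with r about membership in T to a fixed copy of r
  that agrees: the resulting clique edge crosses S' and determines (r, g).\<close>

lemma card_mismatched_le:
  assumes consistent: "\<And>r g. (r, g) \<in> V' \<Longrightarrow> \<exists>k. (r, k) \<in> V' \<and> ((r, k) \<in> S' \<longleftrightarrow> r \<in> T)"
  shows "card {(r, g) \<in> V'. (r, g) \<in> S' \<longleftrightarrow> r \<notin> T} \<le> card (cut E' S' \<inter> F')"
proof -
  let ?M = "{(r, g) \<in> V'. (r, g) \<in> S' \<longleftrightarrow> r \<notin> T}"
  have "\<forall>r. \<exists>k. \<forall>g. (r, g) \<in> V' \<longrightarrow> (r, k) \<in> V' \<and> ((r, k) \<in> S' \<longleftrightarrow> r \<in> T)"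
    using consistent by metis
  then obtain h where h: "\<And>r g. (r, g) \<in> V' \<Longrightarrow> (r, h r) \<in> V' \<and> ((r, h r) \<in> S' \<longleftrightarrow> r \<in> T)"
    by metis
  show ?thesis
  proof (rule card_inj_on_le)
    show "(\<lambda>(r, g). {(r, g), (r, h r)}) ` ?M \<subseteq> cut E' S' \<inter> F'"
    proof clarify
      fix r g assume "(r, g) \<in> V'" and mismatch: "(r, g) \<in> S' \<longleftrightarrow> r \<notin> T"
      with h have "g \<noteq> h r"
        by metis
      then have "{(r, g), (r, h r)} \<in> F'"
        using h[OF \<open>(r, g) \<in> V'\<close>] \<open>(r, g) \<in> V'\<close> by (simp add: clique_edge)
      then show "{(r, g), (r, h r)} \<in> cut E' S' \<inter> F'"
        using h[OF \<open>(r, g) \<in> V'\<close>] mismatch card_doubleton_Int_eq_1_iff[of "(r, g)" "(r, h r)" S']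
        by (auto simp: cut_def infl_E_def)
    qed
    show "inj_on (\<lambda>(r, g). {(r, g), (r, h r)}) ?M"
    proof (rule inj_onI)
      fix a b assume "a \<in> ?M" "b \<in> ?M" and eq: "(\<lambda>(r, g). {(r, g), (r, h r)}) a = (\<lambda>(r, g). {(r, g), (r, h r)}) b"
      obtain r g s k where ab: "a = (r, g)" "b = (s, k)"
        by fastforce
      have "g \<noteq> h r" "k \<noteq> h s"
        using h \<open>a \<in> ?M\<close> \<open>b \<in> ?M\<close> ab by auto
      with eq show "a = b"
        by (auto simp: ab doubleton_eq_iff)
    qed
    show "finite (cut E' S' \<inter> F')"
      using finite_E' by (simp add: cut_def)
  qed
qed

lemma card_uncrossed_cut_le:
  assumes "\<And>r g. (r, g) \<in> V' \<Longrightarrow> \<exists>k. (r, k) \<in> V' \<and> ((r, k) \<in> S' \<longleftrightarrow> r \<in> T)"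
  shows "card {g \<in> cut E T. infl_edge g \<notin> cut E' S'} \<le> card (cut E' S' \<inter> F')"
proof -
  have "finite {(r, g) \<in> V'. (r, g) \<in> S' \<longleftrightarrow> r \<notin> T}"
    using finite_V' by (rule finite_subset[rotated]) auto
  then have "card {g \<in> cut E T. infl_edge g \<notin> cut E' S'} \<le> card {(r, g) \<in> V'. (r, g) \<in> S' \<longleftrightarrow> r \<notin> T}"
    using uncrossed_cut_subset_mismatched by (meson card_image_le card_mono finite_imageI order_trans)
  also have "\<dots> \<le> card (cut E' S' \<inter> F')"
    using assms by (rule card_mismatched_le)
  finally show ?thesis .
qed

lemma clique_in_comp0:
  assumes "(r, g) \<in> V' - {w}" and "(r, k) \<in> V' - {w}"
  shows "(r, k) \<in> comp0 V' E' (infl_cost V E c) w (r, g)"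
proof (cases "g = k")
  case False
  then have "{(r, g), (r, k)} \<in> F'"
    using assms by (simp add: clique_edge)
  then have "{(r, g), (r, k)} \<in> E'" "infl_cost V E c {(r, g), (r, k)} = 0"
    by (auto simp: infl_E_def infl_cost_def)
  then show ?thesis
    using assms unfolding comp0_def reach0_def by (auto intro: r_into_rtrancl)
qed (use assms in \<open>simp add: comp0_def reach0_def\<close>)

context
  fixes w P and c :: "'a set \<Rightarrow> real"
  assumes partition: "partition_on (V' - {w}) P"
    and refines_comp0: "\<forall>a\<in>V' - {w}. \<exists>X\<in>P. comp0 V' E' (infl_cost V E c) w a \<subseteq> X"
begin

lemma class_contains_clique:
  assumes "X \<in> P" "(r, g) \<in> X" "(r, k) \<in> V' - {w}"
  shows "(r, k) \<in> X"
proof -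
  have rg: "(r, g) \<in> V' - {w}"
    using assms(1,2) partition_onD1[OF partition] by blast
  then obtain Y where "Y \<in> P" "comp0 V' E' (infl_cost V E c) w (r, g) \<subseteq> Y"
    using refines_comp0 by blast
  moreover have "(r, g) \<in> comp0 V' E' (infl_cost V E c) w (r, g)"
    using rg by (simp add: comp0_def reach0_def)
  ultimately have "Y = X" "(r, k) \<in> Y"
    using clique_in_comp0[OF rg assms(3)] assms(1,2) partition_onD2[OF partition]
    by (auto dest: disjointD)
  then show ?thesis
    by simp
qed

lemma disjoint_family_on_fst_image: "disjoint_family_on (\<lambda>X. fst ` X) P"
  unfolding disjoint_family_on_def
proof (intro ballI impI, rule ccontr)
  fix X Y assume "X \<in> P" "Y \<in> P" "X \<noteq> Y" "fst ` X \<inter> fst ` Y \<noteq> {}"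
  then obtain r g k where "(r, g) \<in> X" "(r, k) \<in> Y"
    by force
  moreover have "Y \<subseteq> V' - {w}"
    using \<open>Y \<in> P\<close> partition_onD1[OF partition] by blast
  ultimately have "(r, k) \<in> X"
    using class_contains_clique[OF \<open>X \<in> P\<close>] by blast
  then show False
    using \<open>(r, k) \<in> Y\<close> \<open>X \<in> P\<close> \<open>Y \<in> P\<close> \<open>X \<noteq> Y\<close> partition_onD2[OF partition]
    by (auto dest: disjointD)
qed

lemma finite_classes: "finite P"
  using finite_V' partition_onD1[OF partition] by (metis finite_Diff finite_UnionD)

lemma fst_image_class:
  assumes "X \<in> P"
  shows "fst ` X \<noteq> {}" and "fst ` X \<subseteq> V"
proof -
  show "fst ` X \<noteq> {}"
    using assms partition_onD3[OF partition] by auto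
  have "X \<subseteq> V'"
    using assms partition_onD1[OF partition] by blast
  then show "fst ` X \<subseteq> V"
    by (auto simp: infl_V_def)
qed

lemma fst_image_class_psubset:
  assumes "X \<in> P" and "Y \<in> P" and "X \<noteq> Y"
  shows "fst ` X \<subset> V"
proof -
  have "fst ` X \<inter> fst ` Y = {}"
    using disjoint_family_on_fst_image assms by (auto dest: disjoint_family_onD)
  with fst_image_class[OF assms(1)] fst_image_class[OF assms(2)] show ?thesis
    by blast
qed

lemma cut_fst_image_subset:
  assumes "X \<in> P"
  shows "cut E (fst ` X) \<subseteq> insert (snd w) {g \<in> E. infl_edge g \<in> cross_edges E' w P}"
proof
  fix g assume g: "g \<in> cut E (fst ` X)"
  then have "g \<in> E" and "card (g \<inter> fst ` X) = 1"
    by (auto simp: cut_def)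
  then obtain p0 q0 where "p0 \<noteq> q0" "g = {p0, q0}"
    by (auto elim: edgeE)
  then obtain p q where pq: "g = {p, q}" "p \<in> fst ` X" "q \<notin> fst ` X"
    using \<open>card (g \<inter> fst ` X) = 1\<close> card_doubleton_Int_eq_1_iff by (metis insert_commute)
  show "g \<in> insert (snd w) {g \<in> E. infl_edge g \<in> cross_edges E' w P}"
  proof (cases "g = snd w")
    case False
    then have w: "w \<notin> infl_edge g"
      by (auto simp: infl_edge_def)
    have "(p, g) \<in> V' - {w}"
      using \<open>g \<in> E\<close> pq w by (auto intro: infl_edge_in_V' simp: infl_edge_def)
    then have "(p, g) \<in> X"
      using class_contains_clique[OF assms] pq(2) by force
    moreover have "(q, g) \<notin> X"
      using pq(3) by force
    ultimately have "\<not> (\<exists>Z\<in>P. infl_edge g \<subseteq> Z)"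
      using assms pq(1) partition_onD2[OF partition] by (auto dest: disjointD)
    then show ?thesis
      using \<open>g \<in> E\<close> w by (simp add: cross_edges_def infl_E_eq)
  qed simp
qed

end

end

locale inflation_P_EC = inflation +
  fixes x :: "'a set \<Rightarrow> real"
  assumes x_in_P_EC: "x \<in> P_EC V E"
begin

abbreviation "x' \<equiv> infl_vec V E x"

lemma x_bounds: "g \<in> E \<Longrightarrow> 0 \<le> x g \<and> x g \<le> 1"
  using x_in_P_EC by (simp add: P_EC_def)

lemma x_cut_ge_2: "T \<noteq> {} \<Longrightarrow> T \<subset> V \<Longrightarrow> 2 \<le> (\<Sum>g\<in>cut E T. x g)"
  using x_in_P_EC by (simp add: P_EC_def)

lemma infl_vec_bounds: "e \<in> E' \<Longrightarrow> 0 \<le> x' e \<and> x' e \<le> 1"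
  using x_bounds by (auto simp: infl_E_eq infl_vec_def)

lemma cut_le_infl_cut:
  assumes consistent: "\<And>r g. (r, g) \<in> V' \<Longrightarrow> \<exists>k. (r, k) \<in> V' \<and> ((r, k) \<in> S' \<longleftrightarrow> r \<in> T)"
  shows "(\<Sum>g\<in>cut E T. x g) \<le> (\<Sum>e\<in>cut E' S'. x' e)"
proof -
  define CI where "CI = {g \<in> E. infl_edge g \<in> cut E' S'}"
  have "cut E T - CI = {g \<in> cut E T. infl_edge g \<notin> cut E' S'}"
    by (auto simp: CI_def cut_def)
  then have card_le: "card (cut E T - CI) \<le> card (cut E' S' \<inter> F')"
    using card_uncrossed_cut_le[OF consistent] by simp
  have "(\<Sum>g\<in>cut E T. x g) = (\<Sum>g\<in>cut E T \<inter> CI. x g) + (\<Sum>g\<in>cut E T - CI. x g)"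
    using finite_E by (intro sum.Int_Diff) (simp add: cut_def)
  also have "\<dots> \<le> (\<Sum>g\<in>CI. x g) + real (card (cut E' S' \<inter> F'))"
  proof (rule add_mono)
    show "(\<Sum>g\<in>cut E T \<inter> CI. x g) \<le> (\<Sum>g\<in>CI. x g)"
      using finite_E x_bounds by (intro sum_mono2) (auto simp: CI_def)
    have "(\<Sum>g\<in>cut E T - CI. x g) \<le> (\<Sum>g\<in>cut E T - CI. 1)"
      using x_bounds by (intro sum_mono) (auto simp: cut_def)
    then show "(\<Sum>g\<in>cut E T - CI. x g) \<le> real (card (cut E' S' \<inter> F'))"
      using card_le by simp
  qed
  also have "\<dots> = (\<Sum>e\<in>cut E' S'. x' e)"
    using sum_infl_vec_eq[of "cut E' S'" x] by (simp add: CI_def cut_def)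
  finally show ?thesis .
qed

lemma infl_cut_ge_2:
  assumes "S' \<noteq> {}" and "S' \<subset> V'"
  shows "2 \<le> (\<Sum>e\<in>cut E' S'. x' e)"
proof -
  obtain u g v h where uv: "u \<noteq> v" "(u, g) \<in> S'" "(v, h) \<in> V' - S'"
    using assms by (rule proper_subset_meets_two_cliques)
  define T where "T = insert u {r \<in> V. \<forall>k. (r, k) \<in> V' \<longrightarrow> (r, k) \<in> S'}"
  have "u \<in> V" "v \<in> V"
    using uv assms(2) by (auto simp: infl_V_def)
  then have "T \<noteq> {}" "T \<subset> V"
    using uv by (auto simp: T_def)
  then have "2 \<le> (\<Sum>g\<in>cut E T. x g)"
    by (rule x_cut_ge_2)
  also have "\<dots> \<le> (\<Sum>e\<in>cut E' S'. x' e)"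
  proof (rule cut_le_infl_cut)
    fix r k assume rk: "(r, k) \<in> V'"
    consider "r = u" | "r \<noteq> u" "r \<in> T" | "r \<notin> T"
      by blast
    then show "\<exists>k. (r, k) \<in> V' \<and> ((r, k) \<in> S' \<longleftrightarrow> r \<in> T)"
    proof cases
      case 1
      then show ?thesis
        using uv(2) assms(2) by (auto simp: T_def)
    next
      case 2
      then show ?thesis
        using rk by (auto simp: T_def)
    next
      case 3
      moreover have "r \<in> V"
        using rk by (simp add: infl_V_def)
      ultimately show ?thesis
        by (auto simp: T_def)
    qed
  qed
  finally show ?thesis .
qed

lemma infl_partition_ineq:
  assumes "w \<in> V'" and partition: "partition_on (V' - {w}) P"
    and refines_comp0: "\<forall>a\<in>V' - {w}. \<exists>X\<in>P. comp0 V' E' (infl_cost V E c) w a \<subseteq> X"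
  shows "real (card P) - 1 \<le> (\<Sum>e\<in>cross_edges E' w P. x' e)"
proof -
  let ?CE = "{g \<in> E. infl_edge g \<in> cross_edges E' w P}"
  have cross_sub: "cross_edges E' w P \<subseteq> E'"
    by (auto simp: cross_edges_def)
  have CE_le: "(\<Sum>g\<in>?CE. x g) \<le> (\<Sum>e\<in>cross_edges E' w P. x' e)"
    using sum_infl_vec_eq[OF cross_sub, of x] by simp
  show ?thesis
  proof (cases "card P \<le> 1")
    case True
    have "0 \<le> (\<Sum>g\<in>?CE. x g)"
      using x_bounds by (intro sum_nonneg) auto
    then show ?thesis
      using True CE_le by simp
  next
    case False
    have "finite P"
      using finite_classes[OF partition refines_comp0] .
    have "snd w \<in> E"
      using \<open>w \<in> V'\<close> by (auto simp: infl_V_def)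
    have cut_fst_image_ge_2: "2 \<le> (\<Sum>g\<in>cut E (fst ` X). x g)" if "X \<in> P" for X
    proof -
      obtain Y where "Y \<in> P" "Y \<noteq> X"
        using False \<open>X \<in> P\<close> \<open>finite P\<close> by (metis card_le_Suc0_iff_eq One_nat_def not_le_imp_less leD)
      then show ?thesis
        using that fst_image_class[OF partition refines_comp0]
          fst_image_class_psubset[OF partition refines_comp0] by (intro x_cut_ge_2) auto
    qed
    have "2 * real (card P) \<le> (\<Sum>X\<in>P. \<Sum>g\<in>cut E (fst ` X). x g)"
      using sum_mono[of P "\<lambda>_. 2" "\<lambda>X. \<Sum>g\<in>cut E (fst ` X). x g"] cut_fst_image_ge_2 by simp
    also have "\<dots> \<le> 2 * (\<Sum>g\<in>insert (snd w) ?CE. x g)"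
    proof (rule sum_cuts_disjoint_family_le)
      show "finite (insert (snd w) ?CE)"
        using finite_E by simp
      show "\<And>g. g \<in> insert (snd w) ?CE \<Longrightarrow> card g = 2" "\<And>g. g \<in> insert (snd w) ?CE \<Longrightarrow> 0 \<le> x g"
        using \<open>snd w \<in> E\<close> card_edge x_bounds by auto
    qed (use \<open>finite P\<close> disjoint_family_on_fst_image[OF partition refines_comp0]
        cut_fst_image_subset[OF partition refines_comp0] in auto)
    also have "\<dots> \<le> 2 * (1 + (\<Sum>g\<in>?CE. x g))"
      using x_bounds[OF \<open>snd w \<in> E\<close>] x_bounds finite_E
      by (auto simp: sum.insert_if intro: sum_nonneg)
    finally show ?thesis
      using CE_le by simp
  qed
qed

end

theorem mainTheorem9:
  fixes V :: "'a set" and E :: "'a set set" and c x :: "'a set \<Rightarrow> real"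
  assumes "simple_graph V E"
    and "\<forall>e\<in>E. c e \<ge> 0"
    and "x \<in> P_EC V E"
  shows "infl_vec V E x \<in> P_NC (infl_V V E) (infl_E V E) (infl_cost V E c)
    \<and> (\<Sum>e'\<in>infl_E V E. infl_cost V E c e' * infl_vec V E x e') = (\<Sum>e\<in>E. c e * x e)"
proof -
  interpret inflation_P_EC V E x
    using assms(1,3) by unfold_locales
  have "x' \<in> P_NC V' E' (infl_cost V E c)"
    unfolding P_NC_def mem_Collect_eq
  proof (intro conjI allI impI ballI)
    show "2 \<le> (\<Sum>e\<in>cut E' S. x' e)" if "S \<noteq> {} \<and> S \<subset> V'" for S
      using that infl_cut_ge_2 by blast
    show "0 \<le> x' e" "x' e \<le> 1" if "e \<in> E'" for e
      using that infl_vec_bounds by auto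
    show "real (card P) - 1 \<le> (\<Sum>e\<in>cross_edges E' w P. x' e)"
      if "w \<in> V'" and "partition_on (V' - {w}) P
        \<and> (\<forall>a\<in>V' - {w}. \<exists>X\<in>P. comp0 V' E' (infl_cost V E c) w a \<subseteq> X)" for w P
      using that infl_partition_ineq by blast
  qed
  then show ?thesis
    using infl_cost_sum by simp
qed

end
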